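(* Let $A\subseteq[n]^2$ and suppose there is $T\in\mathbb{N}$ with $|\{v\in[n]:(u,v)\in A\}|=T$ for every $u\in[n]$. Let $\Gamma=\Gamma(A)$ and $\Gamma_\uparrow=\Gamma_\uparrow(A)$ be the gates defined below. Then for every $x\in\{0,1\}^{4n}$ satisfying $\varphi_{one}(x)$: $\mathrm{Sig}(\Gamma_\uparrow,x)-\mathrm{Sig}(\Gamma,x)=0$ if $\neg\varphi_{prop}(x)$; $=n-2T-2$ if $\varphi_{prop}(x)$ and $(x_W,x_N)\notin A$; $=n-2T+2$ if $\varphi_{prop}(x)$ and $(x_W,x_N)\in A$.
   Context: $\Gamma(A)$: vertices $b_{i,j}$, $(i,j)\in[n]^2$, with the south edge of $b_{i,j}$ equal to the north edge of $b_{i+1,j}$ and the east edge of $b_{i,j}$ equal to the west edge of $b_{i,j+1}$; $4n$ dangling edges ordered as north edges of the top row (columns $1..n$), east edges of the last column (rows $1..n$), south edges of the bottom row, west edges of the first column; $x=x_Nx_Ex_Sx_W$ accordingly, weight-one strings $0^{v-1}10^{n-v}$ identified with $v$. Apices $a_1,a_2$ with signature $\mathtt{HW}_{=1}$ (value $1$ iff exactly one incident edge is active). For $\tau\notin A$, $b_\tau$ has signature $\mathtt{PASS}$; for $\tau\in A$, $b_\tau$ is joined to $a_1,a_2$ (5th and 6th edges) and has signature $\mathtt{PRE}$. All edge weights $1$. $\Gamma_\uparrow(A)$: obtained from $\Gamma(A)$ by adding a new row of vertices $b_{0,1},\dots,b_{0,n}$ above row $1$ and a new row $b_{n+1,1},\dots,b_{n+1,n}$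 below row $n$ ("dummy rows"): $b_{0,j}$'s south edge is $b_{1,j}$'s north edge and $b_{0,j}$'s north edge becomes the $j$-th northern dangling edge; $b_{n+1,j}$'s north edge is $b_{n,j}$'s south edge and its south edge becomes the $j$-th southern dangling edge; each dummy vertex is joined to $a_1$ and $a_2$ and has the signature $h(a,c,z_5,z_6)=\mathtt{PRE}(a\,0\,c\,0\,z_5z_6)$ on its (north, south, $a_1$-edge, $a_2$-edge). Signatures: for $x\in\{0,1\}^4$ (north, east, south, west), $\mathtt{PASS}(1111)=-1$, $\mathtt{PASS}(0000)=\mathtt{PASS}(0101)=\mathtt{PASS}(1010)=1$, else $0$; $\mathtt{PRE}(x00)=\mathtt{PASS}(x)$, $\mathtt{PRE}(xy)=1$ for $xy\in\{101011,111111,100001,110101,001010,011110\}$, else $0$. $\varphi_{one}(x)\equiv\mathrm{hw}(x_N)=\mathrm{hw}(x_W)=1$; $\varphi_{prop}(x)\equiv x_N=x_S\wedge x_W=x_E$. $\mathrm{Sig}(\Gamma,x)=\sum_y w_\Gamma(xy)\prod_v f_v((xy)|_{I(v)})$ over assignments $y$ to non-dangling edges. *)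

theory Defs
  imports Main
begin

text \<open>Vertices b_(i,j) have rows i and columns j (nat).
  VE i j = the north edge of b_(i,j) (= south edge of b_(i-1,j));
  HE i j = the west edge of b_(i,j) (= east edge of b_(i,j-1));
  AE k i j = the edge joining b_(i,j) to apex a_k (k = 1, 2).\<close>
datatype edge = VE nat nat | HE nat nat | AE nat nat nat

definition PASS :: "bool \<Rightarrow> bool \<Rightarrow> bool \<Rightarrow> bool \<Rightarrow> int" where
  "PASS N E S W =
     (if N \<and> E \<and> S \<and> W then -1
      else if [N,E,S,W] \<in> {[False,False,False,False],[False,True,False,True],[True,False,True,False]}
      then 1 else 0)"

definition PRE :: "bool \<Rightarrow> bool \<Rightarrow> bool \<Rightarrow> bool \<Rightarrow> bool \<Rightarrow> bool \<Rightarrow> int" where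
  "PRE N E S W z5 z6 =
     (if \<not> z5 \<and> \<not> z6 then PASS N E S W
      else if [N,E,S,W,z5,z6] \<in>
        {[True,False,True,False,True,True], [True,True,True,True,True,True],
         [True,False,False,False,False,True], [True,True,False,True,False,True],
         [False,False,True,False,True,False], [False,True,True,True,True,False]}
      then 1 else 0)"

text \<open>Signature of the dummy vertices, on (north, south, a1-edge, a2-edge).\<close>
definition hsig :: "bool \<Rightarrow> bool \<Rightarrow> bool \<Rightarrow> bool \<Rightarrow> int" where
  "hsig a c z5 z6 = PRE a False c False z5 z6"

definition HW1 :: "edge set \<Rightarrow> (edge \<Rightarrow> bool) \<Rightarrow> int" where
  "HW1 I \<sigma> = (if card {e \<in> I. \<sigma> e} = 1 then 1 else 0)"

definition xN :: "nat \<Rightarrow> bool list \<Rightarrow> bool list" where "xN n x = take n x"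
definition xE :: "nat \<Rightarrow> bool list \<Rightarrow> bool list" where "xE n x = take n (drop n x)"
definition xS :: "nat \<Rightarrow> bool list \<Rightarrow> bool list" where "xS n x = take n (drop (2*n) x)"
definition xW :: "nat \<Rightarrow> bool list \<Rightarrow> bool list" where "xW n x = take n (drop (3*n) x)"

definition hw :: "bool list \<Rightarrow> nat" where "hw s = length (filter id s)"

definition wpos :: "bool list \<Rightarrow> nat" where
  "wpos s = (THE v. v \<in> {1..length s} \<and>
                    s = replicate (v - 1) False @ True # replicate (length s - v) False)"

definition phi_one :: "nat \<Rightarrow> bool list \<Rightarrow> bool" where
  "phi_one n x \<longleftrightarrow> hw (xN n x) = 1 \<and> hw (xW n x) = 1"

definition phi_prop :: "nat \<Rightarrow> bool list \<Rightarrow> bool" where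
  "phi_prop n x \<longleftrightarrow> xN n x = xS n x \<and> xW n x = xE n x"

text \<open>In Gamma(A) the northern dangling edges are VE 1 j
  and the southern ones VE (n+1) j; in Gamma_up(A) they are VE 0 j and VE (n+2) j.\<close>
definition dangling :: "nat \<Rightarrow> nat \<Rightarrow> nat \<Rightarrow> bool list \<Rightarrow> edge \<Rightarrow> bool" where
  "dangling n tp bt x e = (case e of
      VE i j \<Rightarrow> (if i = tp then x ! (j - 1) else if i = bt then x ! (2*n + j - 1) else False)
    | HE i j \<Rightarrow> (if j = n + 1 then x ! (n + i - 1) else if j = 1 then x ! (3*n + i - 1) else False)
    | AE k i j \<Rightarrow> False)"

definition grid_val :: "nat \<Rightarrow> (nat \<times> nat) set \<Rightarrow> (edge \<Rightarrow> bool) \<Rightarrow> int" where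
  "grid_val n A \<sigma> = (\<Prod>(i,j)\<in>{1..n}\<times>{1..n}.
      if (i,j) \<in> A
      then PRE (\<sigma> (VE i j)) (\<sigma> (HE i (j+1))) (\<sigma> (VE (i+1) j)) (\<sigma> (HE i j))
               (\<sigma> (AE 1 i j)) (\<sigma> (AE 2 i j))
      else PASS (\<sigma> (VE i j)) (\<sigma> (HE i (j+1))) (\<sigma> (VE (i+1) j)) (\<sigma> (HE i j)))"

definition apexG :: "nat \<Rightarrow> (nat \<times> nat) set \<Rightarrow> edge set" where
  "apexG k A = {AE k i j | i j. (i,j) \<in> A}"

definition internalG :: "nat \<Rightarrow> (nat \<times> nat) set \<Rightarrow> edge set" where
  "internalG n A = {VE i j | i j. i \<in> {2..n} \<and> j \<in> {1..n}}
                 \<union> {HE i j | i j. i \<in> {1..n} \<and> j \<in> {2..n}}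
                 \<union> apexG 1 A \<union> apexG 2 A"

definition valG :: "nat \<Rightarrow> (nat \<times> nat) set \<Rightarrow> (edge \<Rightarrow> bool) \<Rightarrow> int" where
  "valG n A \<sigma> = grid_val n A \<sigma> * HW1 (apexG 1 A) \<sigma> * HW1 (apexG 2 A) \<sigma>"

text \<open>Sig(Gamma, x): sum over assignments to the non-dangling edges (represented by the set
  S of active ones); all edge weights are 1, so the weight factor is 1.\<close>
definition SigG :: "nat \<Rightarrow> (nat \<times> nat) set \<Rightarrow> bool list \<Rightarrow> int" where
  "SigG n A x = (\<Sum>S\<in>Pow (internalG n A).
      valG n A (\<lambda>e. if e \<in> internalG n A then e \<in> S else dangling n 1 (n+1) x e))"

definition apexU :: "nat \<Rightarrow> nat \<Rightarrow> (nat \<times> nat) set \<Rightarrow> edge set" where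
  "apexU n k A = {AE k i j | i j. (i,j) \<in> A \<or> (i \<in> {0, n+1} \<and> j \<in> {1..n})}"

definition internalU :: "nat \<Rightarrow> (nat \<times> nat) set \<Rightarrow> edge set" where
  "internalU n A = {VE i j | i j. i \<in> {1..n+1} \<and> j \<in> {1..n}}
                 \<union> {HE i j | i j. i \<in> {1..n} \<and> j \<in> {2..n}}
                 \<union> apexU n 1 A \<union> apexU n 2 A"

definition dummy_val :: "nat \<Rightarrow> (edge \<Rightarrow> bool) \<Rightarrow> int" where
  "dummy_val n \<sigma> = (\<Prod>(i,j)\<in>{0, n+1}\<times>{1..n}.
      hsig (\<sigma> (VE i j)) (\<sigma> (VE (i+1) j)) (\<sigma> (AE 1 i j)) (\<sigma> (AE 2 i j)))"

definition valU :: "nat \<Rightarrow> (nat \<times> nat) set \<Rightarrow> (edge \<Rightarrow> bool) \<Rightarrow> int" where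
  "valU n A \<sigma> = grid_val n A \<sigma> * dummy_val n \<sigma> * HW1 (apexU n 1 A) \<sigma> * HW1 (apexU n 2 A) \<sigma>"

definition SigU :: "nat \<Rightarrow> (nat \<times> nat) set \<Rightarrow> bool list \<Rightarrow> int" where
  "SigU n A x = (\<Sum>S\<in>Pow (internalU n A).
      valU n A (\<lambda>e. if e \<in> internalU n A then e \<in> S else dangling n 0 (n+2) x e))"

end

theory Submission
  imports Defs
begin

text \<open>Every vertex signature forces its east and west edges to agree and determines its south
  edge from its north edge and its two apex edges: a vertical line is switched on at the vertex
  p1 chosen by the apex a1 and switched off at the vertex p2 chosen by a2. So a non-vanishing
  assignment is fixed by the pair (p1, p2), the only horizontal line is the row r of x_W = x_E,
  and its weight is a legality factor for the two switches times -1 for every crossing of an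
  active vertical line with row r, provided the resulting bottom profile is x_S. Both gates are
  instances of this description; the dummy rows of Gamma_up only add further choices of p1, p2.
  With x_N the column c, every weight vanishes unless x_S = x_N, and the pairs involving a dummy
  vertex contribute n - 2 among themselves and +2 or -2 for each vertex of A in row r, the sign
  being + exactly for the vertex (r, c). This gives n - 2T - 2 + 4 [(r, c) \<in> A].\<close>

text \<open>pre_legal forbids switching a vertical line on (a) where it is already on or off (b)
  where it is already off; pre_sign is the -1 of a plain crossing of two active lines.\<close>
definition pre_south :: "bool \<Rightarrow> bool \<Rightarrow> bool \<Rightarrow> bool" where
  "pre_south N a b = (a \<or> (N \<and> \<not> b))"

definition pre_legal :: "bool \<Rightarrow> bool \<Rightarrow> bool \<Rightarrow> int" where
  "pre_legal N a b = (if (a \<and> \<not> b \<and> N) \<or> (b \<and> \<not> N) then 0 else 1)"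

definition pre_sign :: "bool \<Rightarrow> bool \<Rightarrow> bool \<Rightarrow> bool \<Rightarrow> int" where
  "pre_sign N W a b = (if \<not> a \<and> \<not> b \<and> N \<and> W then -1 else 1)"

lemma PRE_east_eq_west:
  "PRE N W S W a b = (if S = pre_south N a b then pre_legal N a b * pre_sign N W a b else 0)"
  by (cases N; cases W; cases S; cases a; cases b)
     (simp_all add: PRE_def PASS_def pre_south_def pre_legal_def pre_sign_def)

lemma PRE_nonzero_imp:
  "PRE N E S W a b \<noteq> 0 \<Longrightarrow> E = W \<and> S = pre_south N a b"
  by (cases N; cases W; cases S; cases a; cases b; cases E)
     (simp_all add: PRE_def PASS_def pre_south_def)

lemma PASS_eq_PRE: "PASS N E S W = PRE N E S W False False"
  by (simp add: PRE_def)

section \<open>Column profiles and pair weights\<close>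

text \<open>The value on the vertical edge above row i of column j when the column enters with t j
  and is switched on at the vertex p1 and off at the vertex p2; the lower of the two wins.\<close>
definition profile :: "(nat \<Rightarrow> bool) \<Rightarrow> nat \<times> nat \<Rightarrow> nat \<times> nat \<Rightarrow> nat \<Rightarrow> nat \<Rightarrow> bool" where
  "profile t p1 p2 i j =
    (if snd p1 = j \<and> fst p1 < i \<and> (\<not> (snd p2 = j \<and> fst p2 < i) \<or> fst p2 \<le> fst p1) then True
     else if snd p2 = j \<and> fst p2 < i then False else t j)"

lemma profile_Suc:
  "profile t p1 p2 (Suc i) j = pre_south (profile t p1 p2 i j) ((i,j) = p1) ((i,j) = p2)"
  by (cases p1; cases p2) (auto simp: profile_def pre_south_def)

lemma profile_above: "i \<le> fst p1 \<Longrightarrow> i \<le> fst p2 \<Longrightarrow> profile t p1 p2 i j = t j"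
  by (auto simp: profile_def)

lemma profile_unique:
  assumes "lo \<le> k" "lo \<le> fst p1" "lo \<le> fst p2" "v lo = t j"
    and "\<And>i. lo \<le> i \<Longrightarrow> i < k \<Longrightarrow> v (Suc i) = pre_south (v i) ((i,j) = p1) ((i,j) = p2)"
  shows "v k = profile t p1 p2 k j"
  using assms(1)
proof (induction k rule: dec_induct)
  case base
  show ?case using assms(2-4) by (simp add: profile_above)
next
  case (step i)
  then show ?case using assms(5) by (simp add: profile_Suc)
qed

definition flip_weight :: "(nat \<Rightarrow> bool) \<Rightarrow> nat \<times> nat \<Rightarrow> nat \<times> nat \<Rightarrow> int" where
  "flip_weight t p1 p2 = pre_legal (profile t p1 p2 (fst p1) (snd p1)) True (p1 = p2) *
     (if p1 = p2 then 1 else pre_legal (profile t p1 p2 (fst p2) (snd p2)) False True)"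

definition crossing_sign :: "(nat \<Rightarrow> bool) \<Rightarrow> nat \<Rightarrow> nat \<Rightarrow> nat \<times> nat \<Rightarrow> nat \<times> nat \<Rightarrow> int" where
  "crossing_sign t n r p1 p2 =
     (\<Prod>j\<in>{1..n}. if profile t p1 p2 r j \<and> (r,j) \<noteq> p1 \<and> (r,j) \<noteq> p2 then -1 else 1)"

definition pair_weight ::
    "(nat \<Rightarrow> bool) \<Rightarrow> nat \<Rightarrow> nat \<Rightarrow> (nat \<Rightarrow> bool) \<Rightarrow> nat \<Rightarrow> nat \<times> nat \<Rightarrow> nat \<times> nat \<Rightarrow> int" where
  "pair_weight t n r s h p1 p2 =
     (if \<forall>j\<in>{1..n}. s j = profile t p1 p2 h j then 1 else 0) * flip_weight t p1 p2 * crossing_sign t n r p1 p2"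

lemma prod_if_zero_one:
  "finite V \<Longrightarrow> (\<Prod>v\<in>V. if P v then 0 else 1 :: int) = (if \<exists>v\<in>V. P v then 0 else 1)"
  by (auto simp: prod_zero_iff intro: prod.neutral)

lemma prod_PRE_profile:
  assumes p1: "p1 \<in> {lo..hi} \<times> {1..n}" and p2: "p2 \<in> {lo..hi} \<times> {1..n}" and r: "r \<in> {lo..hi}"
  shows "(\<Prod>(i,j)\<in>{lo..hi} \<times> {1..n}. PRE (profile t p1 p2 i j) (i = r)
            (if i = hi then s j else profile t p1 p2 (Suc i) j) (i = r) ((i,j) = p1) ((i,j) = p2))
       = pair_weight t n r s (Suc hi) p1 p2"
proof -
  let ?V = "{lo..hi} \<times> {1..n}" and ?p = "profile t p1 p2"
  define bottom where "bottom = (\<lambda>(i,j). if i = hi \<and> s j \<noteq> ?p (Suc hi) j then 0 else (1::int))"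
  define legal where "legal = (\<lambda>(i,j). pre_legal (?p i j) ((i,j) = p1) ((i,j) = p2))"
  define sign where "sign = (\<lambda>(i,j). pre_sign (?p i j) (i = r) ((i,j) = p1) ((i,j) = p2))"
  have "(\<Prod>(i,j)\<in>?V. PRE (?p i j) (i = r)
            (if i = hi then s j else ?p (Suc i) j) (i = r) ((i,j) = p1) ((i,j) = p2))
      = (\<Prod>v\<in>?V. bottom v * legal v * sign v)"
    by (rule prod.cong) (auto simp: PRE_east_eq_west profile_Suc bottom_def legal_def sign_def)
  also have "\<dots> = prod bottom ?V * prod legal ?V * prod sign ?V"
    by (simp add: prod.distrib)
  also have "prod bottom ?V = (if \<forall>j\<in>{1..n}. s j = ?p (Suc hi) j then 1 else 0)"
  proof -
    have "prod bottom ?V = (\<Prod>v\<in>?V. if fst v = hi \<and> s (snd v) \<noteq> ?p (Suc hi) (snd v) then 0 else 1)"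
      by (rule prod.cong) (auto simp: bottom_def)
    then show ?thesis using r by (auto simp: prod_if_zero_one)
  qed
  also have "prod legal ?V = flip_weight t p1 p2"
  proof -
    have "prod legal ?V = prod legal {p1,p2}"
      by (rule prod.mono_neutral_right) (use p1 p2 in \<open>auto simp: legal_def pre_legal_def split: if_splits\<close>)
    then show ?thesis by (cases p1; cases p2) (auto simp: legal_def flip_weight_def)
  qed
  also have "prod sign ?V = crossing_sign t n r p1 p2"
  proof -
    have "prod sign ?V = prod sign ({r} \<times> {1..n})"
      by (rule prod.mono_neutral_right) (use r in \<open>auto simp: sign_def pre_sign_def split: if_splits\<close>)
    also have "\<dots> = (\<Prod>i\<in>{r}. \<Prod>j\<in>{1..n}. sign (i,j))"
      by (simp add: prod.cartesian_product)
    also have "\<dots> = crossing_sign t n r p1 p2"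
      by (auto simp: sign_def crossing_sign_def pre_sign_def intro!: prod.cong)
    finally show ?thesis .
  qed
  finally show ?thesis by (simp add: pair_weight_def)
qed

text \<open>Row indices grow downwards, so sign_above a r = -1 means that row a lies above row r.\<close>
definition sign_above :: "nat \<Rightarrow> nat \<Rightarrow> int" where "sign_above a r = (if a < r then -1 else 1)"
definition sign_below :: "nat \<Rightarrow> nat \<Rightarrow> int" where "sign_below a r = (if r < a then -1 else 1)"

definition pair_value :: "nat \<Rightarrow> nat \<Rightarrow> nat \<Rightarrow> (nat \<Rightarrow> bool) \<Rightarrow> nat \<times> nat \<Rightarrow> nat \<times> nat \<Rightarrow> int" where
  "pair_value n c r s p1 p2 = (if snd p1 = snd p2 then
     (if \<forall>j\<in>{1..n}. s j = (j = c) then 1 else 0) *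
     (if snd p1 = c then (if fst p2 \<le> fst p1 then sign_above (fst p1) r * sign_below (fst p2) r else 0)
      else (if fst p1 < fst p2 then (if fst p1 < r \<and> r < fst p2 then 1 else -1) else 0))
   else if snd p2 = c then
     (if \<forall>j\<in>{1..n}. s j = (j = snd p1) then 1 else 0) * sign_above (fst p1) r * sign_below (fst p2) r
   else 0)"

lemma crossing_sign_indicator:
  fixes a1 a2 r :: nat
  assumes "b1 \<in> {1..n}" "b2 \<in> {1..n}" "c \<in> {1..n}" "\<forall>j\<in>{1..n}. t j = (j = c)"
  defines "cross \<equiv> (\<lambda>j. if profile t (a1,b1) (a2,b2) r j \<and> (r,j) \<noteq> (a1,b1) \<and> (r,j) \<noteq> (a2,b2)
                        then -1 else (1::int))"
  shows "crossing_sign t n r (a1,b1) (a2,b2)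
       = (if c = b1 \<or> c = b2 then 1 else -1) * cross b1 * (if b2 = b1 then 1 else cross b2)"
proof -
  have cols: "{1..n} = ({1..n} - {b1,b2}) \<union> {b1,b2}" using assms by auto
  have "crossing_sign t n r (a1,b1) (a2,b2) = prod cross ({1..n} - {b1,b2}) * prod cross {b1,b2}"
    unfolding crossing_sign_def cross_def by (subst cols, rule prod.union_disjoint) auto
  also have "prod cross ({1..n} - {b1,b2}) = (\<Prod>j\<in>{1..n} - {b1,b2}. if j = c then -1 else 1)"
    by (rule prod.cong) (use assms in \<open>auto simp: profile_def\<close>)
  also have "\<dots> = (if c = b1 \<or> c = b2 then 1 else -1)"
    using assms by auto
  finally show ?thesis by simp
qed

lemma flip_weight_indicator:
  assumes "b1 \<in> {1..n}" "b2 \<in> {1..n}" "\<forall>j\<in>{1..n}. t j = (j = c)"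
  shows "flip_weight t (a1,b1) (a2,b2) =
    (if b1 = b2 then (if b1 = c then (if a2 \<le> a1 then 1 else 0) else (if a1 < a2 then 1 else 0))
     else (if b2 = c then 1 else 0))"
proof -
  have "t b1 = (b1 = c)" "t b2 = (b2 = c)" using assms by auto
  then show ?thesis by (auto simp: flip_weight_def pre_legal_def profile_def)
qed

lemma pair_weight_same_column:
  assumes b: "b \<in> {1..n}" and c: "c \<in> {1..n}" and t: "\<forall>j\<in>{1..n}. t j = (j = c)"
    and h: "a1 < h" "a2 < h"
  shows "pair_weight t n r s h (a1,b) (a2,b) = pair_value n c r s (a1,b) (a2,b)"
proof -
  let ?p = "profile t (a1,b) (a2,b)"
  let ?cross = "if ?p r b \<and> (r,b) \<noteq> (a1,b) \<and> (r,b) \<noteq> (a2,b) then -1 else (1::int)"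
  have tb: "t b = (b = c)" using b t by simp
  have weight: "pair_weight t n r s h (a1,b) (a2,b)
      = (if \<forall>j\<in>{1..n}. s j = ?p h j then 1 else 0) * flip_weight t (a1,b) (a2,b) * ?cross
          * (if c = b then 1 else -1)"
    by (simp add: pair_weight_def crossing_sign_indicator[OF b b c t])
  have bottom: "(\<forall>j\<in>{1..n}. s j = ?p h j) = (\<forall>j\<in>{1..n}. s j = (j = c))"
    if "\<forall>j\<in>{1..n}. ?p h j = (j = c)"
    using that by auto
  consider "b = c" "a2 \<le> a1" | "b = c" "a1 < a2" | "b \<noteq> c" "a1 < a2" | "b \<noteq> c" "a2 \<le> a1"
    by linarith
  then show ?thesis
  proof cases
    case 1
    then have "\<forall>j\<in>{1..n}. ?p h j = (j = c)" using t h by (auto simp: profile_def)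
    moreover have "?cross = sign_above a1 r * sign_below a2 r"
      using 1 tb by (auto simp: profile_def sign_above_def sign_below_def)
    ultimately show ?thesis
      unfolding weight flip_weight_indicator[OF b b t] using 1 by (simp add: bottom pair_value_def)
  next
    case 3
    then have "\<forall>j\<in>{1..n}. ?p h j = (j = c)" using t h by (auto simp: profile_def)
    moreover have "?cross = (if a1 < r \<and> r < a2 then -1 else 1)"
      using 3 tb by (auto simp: profile_def)
    ultimately show ?thesis
      unfolding weight flip_weight_indicator[OF b b t] using 3 by (simp add: bottom pair_value_def)
  qed (unfold weight flip_weight_indicator[OF b b t], simp_all add: pair_value_def)
qed

lemma pair_weight_distinct_columns:
  assumes b: "b1 \<in> {1..n}" "b2 \<in> {1..n}" "b1 \<noteq> b2" and c: "c \<in> {1..n}"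
    and t: "\<forall>j\<in>{1..n}. t j = (j = c)" and h: "a1 < h" "a2 < h"
  shows "pair_weight t n r s h (a1,b1) (a2,b2) = pair_value n c r s (a1,b1) (a2,b2)"
proof (cases "b2 = c")
  case True
  have "\<forall>j\<in>{1..n}. profile t (a1,b1) (a2,b2) h j = (j = b1)"
    using t h b True by (auto simp: profile_def)
  then have bottom: "(\<forall>j\<in>{1..n}. s j = profile t (a1,b1) (a2,b2) h j) = (\<forall>j\<in>{1..n}. s j = (j = b1))"
    by auto
  have "(if profile t (a1,b1) (a2,b2) r b1 \<and> (r,b1) \<noteq> (a1,b1) \<and> (r,b1) \<noteq> (a2,b2) then -1 else (1::int))
      = sign_above a1 r"
   and "(if profile t (a1,b1) (a2,b2) r b2 \<and> (r,b2) \<noteq> (a1,b1) \<and> (r,b2) \<noteq> (a2,b2) then -1 else (1::int))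
      = sign_below a2 r"
    using b t True by (auto simp: profile_def sign_above_def sign_below_def)
  then have "crossing_sign t n r (a1,b1) (a2,b2) = sign_above a1 r * sign_below a2 r"
    unfolding crossing_sign_indicator[OF b(1,2) c t] using b(3) True by simp
  moreover have "flip_weight t (a1,b1) (a2,b2) = 1"
    unfolding flip_weight_indicator[OF b(1,2) t] using b(3) True by simp
  ultimately show ?thesis
    unfolding pair_weight_def bottom using b(3) True by (simp add: pair_value_def)
next
  case False
  then show ?thesis using b by (simp add: pair_weight_def pair_value_def flip_weight_indicator[OF b(1,2) t])
qed

lemma pair_weight_eq_pair_value:
  assumes "b1 \<in> {1..n}" "b2 \<in> {1..n}" "c \<in> {1..n}" "\<forall>j\<in>{1..n}. t j = (j = c)" "a1 < h" "a2 < h"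
  shows "pair_weight t n r s h (a1,b1) (a2,b2) = pair_value n c r s (a1,b1) (a2,b2)"
  using assms pair_weight_same_column pair_weight_distinct_columns by (cases "b1 = b2") auto

section \<open>Summing over the dummy vertices\<close>

definition dummy_vertices :: "nat \<Rightarrow> (nat \<times> nat) set" where
  "dummy_vertices n = {0, n+1} \<times> {1..n}"

lemma sum_dummy_vertices:
  fixes g :: "nat \<times> nat \<Rightarrow> 'a::comm_monoid_add"
  shows "(\<Sum>p\<in>dummy_vertices n. g p) = (\<Sum>j\<in>{1..n}. g (0,j) + g (n+1,j))"
proof -
  have "(\<Sum>p\<in>dummy_vertices n. g p) = (\<Sum>i\<in>{0, n+1}. \<Sum>j\<in>{1..n}. g (i,j))"
    by (simp add: dummy_vertices_def sum.cartesian_product)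
  then show ?thesis by (simp add: sum.distrib)
qed

lemma sum_square_union_diff:
  fixes f :: "'a \<Rightarrow> 'a \<Rightarrow> 'b::comm_ring"
  assumes "finite A" "finite D" "A \<inter> D = {}"
  shows "(\<Sum>(p1,p2)\<in>(A \<union> D) \<times> (A \<union> D). f p1 p2) - (\<Sum>(p1,p2)\<in>A \<times> A. f p1 p2)
       = (\<Sum>p1\<in>A. \<Sum>p2\<in>D. f p1 p2) + (\<Sum>p2\<in>A. \<Sum>p1\<in>D. f p1 p2) + (\<Sum>p1\<in>D. \<Sum>p2\<in>D. f p1 p2)"
proof -
  have "(\<Sum>(p1,p2)\<in>(A \<union> D) \<times> (A \<union> D). f p1 p2) = (\<Sum>p1\<in>A \<union> D. \<Sum>p2\<in>A \<union> D. f p1 p2)"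
    and "(\<Sum>(p1,p2)\<in>A \<times> A. f p1 p2) = (\<Sum>p1\<in>A. \<Sum>p2\<in>A. f p1 p2)"
    by (simp_all add: sum.cartesian_product)
  moreover have "(\<Sum>p1\<in>D. \<Sum>p2\<in>A. f p1 p2) = (\<Sum>p2\<in>A. \<Sum>p1\<in>D. f p1 p2)"
    by (rule sum.swap)
  ultimately show ?thesis
    using assms by (simp add: sum.union_disjoint sum.distrib)
qed

lemma sum_row_signs:
  fixes n r c T :: nat
  assumes A: "A \<subseteq> {1..n} \<times> {1..n}" and T: "card {v \<in> {1..n}. (r, v) \<in> A} = T"
  shows "(\<Sum>p\<in>A. (if snd p = c then 1 else -1) * (if fst p = r then 2 else (0::int)))
        = (if (r,c) \<in> A then 4 else 0) - 2 * int T"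
proof -
  have finA: "finite A" using A finite_subset by blast
  have "{p\<in>A. fst p = r} = (\<lambda>v. (r,v)) ` {v \<in> {1..n}. (r, v) \<in> A}"
    using A by force
  then have "card {p\<in>A. fst p = r} = T"
    using T by (simp add: card_image inj_on_def)
  then have row: "(\<Sum>p\<in>A. if fst p = r then 1 else (0::int)) = int T"
    using finA by (simp add: sum.If_cases Int_def)
  have corner: "(\<Sum>p\<in>A. if p = (r,c) then 1 else (0::int)) = (if (r,c) \<in> A then 1 else 0)"
    using finA by simp
  have "(\<Sum>p\<in>A. (if snd p = c then 1 else -1) * (if fst p = r then 2 else (0::int)))
      = (\<Sum>p\<in>A. 4 * (if p = (r,c) then 1 else 0) - 2 * (if fst p = r then 1 else (0::int)))"
    by (rule sum.cong) auto
  also have "\<dots> = 4 * (\<Sum>p\<in>A. if p = (r,c) then 1 else 0) - 2 * (\<Sum>p\<in>A. if fst p = r then 1 else (0::int))"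
    by (simp only: sum_subtractf sum_distrib_left)
  finally show ?thesis by (simp add: row corner)
qed

context
  fixes n c r :: nat and s :: "nat \<Rightarrow> bool"
  assumes c: "c \<in> {1..n}" and r: "r \<in> {1..n}"
begin

abbreviation south_match :: int where
  "south_match \<equiv> if \<forall>j\<in>{1..n}. s j = (j = c) then 1 else 0"

lemma pair_value_grid_dummy:
  assumes "a \<in> {1..n}" "b \<in> {1..n}" "j \<in> {1..n}"
  shows "pair_value n c r s (a,b) (0,j) + pair_value n c r s (a,b) (n+1,j)
       + (pair_value n c r s (0,j) (a,b) + pair_value n c r s (n+1,j) (a,b))
       = (if j = b then south_match * (if b = c then 1 else -1) * (sign_above a r + sign_below a r) else 0)"
  using assms c r by (auto simp: pair_value_def sign_above_def sign_below_def)

lemma pair_value_dummy_dummy: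
  assumes "j1 \<in> {1..n}" "j2 \<in> {1..n}"
  shows "pair_value n c r s (0,j1) (0,j2) + pair_value n c r s (0,j1) (n+1,j2)
       + (pair_value n c r s (n+1,j1) (0,j2) + pair_value n c r s (n+1,j1) (n+1,j2))
       = (if j1 = j2 then south_match * (if j1 = c then -1 else 1) else 0)"
  using assms c r by (auto simp: pair_value_def sign_above_def sign_below_def)

lemma sum_pair_value_grid_dummy:
  assumes "a \<in> {1..n}" "b \<in> {1..n}"
  shows "(\<Sum>p2\<in>dummy_vertices n. pair_value n c r s (a,b) p2)
       + (\<Sum>p1\<in>dummy_vertices n. pair_value n c r s p1 (a,b))
       = south_match * (if b = c then 1 else -1) * (if a = r then 2 else 0)"
proof -
  have "(\<Sum>p2\<in>dummy_vertices n. pair_value n c r s (a,b) p2)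
      + (\<Sum>p1\<in>dummy_vertices n. pair_value n c r s p1 (a,b))
      = (\<Sum>j\<in>{1..n}. if j = b then south_match * (if b = c then 1 else -1) * (sign_above a r + sign_below a r) else 0)"
    unfolding sum_dummy_vertices sum.distrib[symmetric]
    by (intro sum.cong refl, rule pair_value_grid_dummy[OF assms])
  then show ?thesis using assms by (simp add: sign_above_def sign_below_def)
qed

lemma sum_pair_value_dummy_dummy:
  "(\<Sum>p1\<in>dummy_vertices n. \<Sum>p2\<in>dummy_vertices n. pair_value n c r s p1 p2) = south_match * (int n - 2)"
proof -
  have "(\<Sum>p1\<in>dummy_vertices n. \<Sum>p2\<in>dummy_vertices n. pair_value n c r s p1 p2)
      = (\<Sum>j1\<in>{1..n}. \<Sum>j2\<in>{1..n}. if j1 = j2 then south_match * (if j1 = c then -1 else 1) else 0)"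
    unfolding sum_dummy_vertices sum.distrib[symmetric]
    by (intro sum.cong refl, rule pair_value_dummy_dummy, assumption+)
  also have "\<dots> = (\<Sum>j\<in>{1..n}. south_match - 2 * south_match * (if j = c then 1 else 0))"
    by (intro sum.cong refl) auto
  also have "\<dots> = south_match * (int n - 2)"
    using c by (simp add: sum_subtractf sum_distrib_left[symmetric] algebra_simps)
  finally show ?thesis .
qed

lemma sum_pair_value_dummy_difference:
  assumes A: "A \<subseteq> {1..n} \<times> {1..n}" and T: "card {v \<in> {1..n}. (r, v) \<in> A} = T"
  shows "(\<Sum>(p1,p2)\<in>(A \<union> dummy_vertices n) \<times> (A \<union> dummy_vertices n). pair_value n c r s p1 p2)
       - (\<Sum>(p1,p2)\<in>A \<times> A. pair_value n c r s p1 p2)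
       = south_match * (int n - 2 - 2 * int T + (if (r,c) \<in> A then 4 else 0))"
proof -
  let ?D = "dummy_vertices n" and ?v = "pair_value n c r s"
  have finA: "finite A" using A finite_subset by blast
  have finD: "finite ?D" and disj: "A \<inter> ?D = {}" using A by (auto simp: dummy_vertices_def)
  have split: "(\<Sum>(p1,p2)\<in>(A \<union> ?D) \<times> (A \<union> ?D). ?v p1 p2) - (\<Sum>(p1,p2)\<in>A \<times> A. ?v p1 p2)
      = (\<Sum>p\<in>A. \<Sum>p2\<in>?D. ?v p p2) + (\<Sum>p\<in>A. \<Sum>p1\<in>?D. ?v p1 p) + south_match * (int n - 2)"
    by (simp only: sum_square_union_diff[OF finA finD disj] sum_pair_value_dummy_dummy)
  have "(\<Sum>p\<in>A. \<Sum>p2\<in>?D. ?v p p2) + (\<Sum>p\<in>A. \<Sum>p1\<in>?D. ?v p1 p)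
      = (\<Sum>p\<in>A. (\<Sum>p2\<in>?D. ?v p p2) + (\<Sum>p1\<in>?D. ?v p1 p))"
    by (simp only: sum.distrib)
  also have "\<dots> = (\<Sum>p\<in>A. south_match * (if snd p = c then 1 else -1) * (if fst p = r then 2 else 0))"
  proof (rule sum.cong)
    fix p assume "p \<in> A"
    then obtain a b where "p = (a,b)" "a \<in> {1..n}" "b \<in> {1..n}" using A by auto
    then show "(\<Sum>p2\<in>?D. ?v p p2) + (\<Sum>p1\<in>?D. ?v p1 p)
        = south_match * (if snd p = c then 1 else -1) * (if fst p = r then 2 else 0)"
      by (simp add: sum_pair_value_grid_dummy)
  qed simp
  finally have mixed: "(\<Sum>p\<in>A. \<Sum>p2\<in>?D. ?v p p2) + (\<Sum>p\<in>A. \<Sum>p1\<in>?D. ?v p1 p)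
      = south_match * (\<Sum>p\<in>A. (if snd p = c then 1 else -1) * (if fst p = r then 2 else (0::int)))"
    by (simp add: sum_distrib_left mult.assoc)
  show ?thesis
    unfolding split mixed sum_row_signs[OF A T] by (simp add: algebra_simps)
qed

end

section \<open>Both gates as one generic gate\<close>

definition north_bit :: "bool list \<Rightarrow> nat \<Rightarrow> bool" where "north_bit x j = x ! (j - 1)"
definition east_bit :: "nat \<Rightarrow> bool list \<Rightarrow> nat \<Rightarrow> bool" where "east_bit n x i = x ! (n + i - 1)"
definition south_bit :: "nat \<Rightarrow> bool list \<Rightarrow> nat \<Rightarrow> bool" where "south_bit n x j = x ! (2*n + j - 1)"
definition west_bit :: "nat \<Rightarrow> bool list \<Rightarrow> nat \<Rightarrow> bool" where "west_bit n x i = x ! (3*n + i - 1)"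

text \<open>A gate with vertex rows lo..hi, apex-connected vertices P and horizontal edges only in
  rows 1..n: Gamma(A) is the case lo = 1, hi = n, P = A, and Gamma_up(A) the case lo = 0,
  hi = n + 1 with P enlarged by the dummy vertices.\<close>
definition gate_edges :: "nat \<Rightarrow> nat set \<Rightarrow> (nat \<times> nat) set \<Rightarrow> edge set" where
  "gate_edges n R P = {VE i j | i j. i \<in> R \<and> j \<in> {1..n}} \<union> {HE i j | i j. i \<in> {1..n} \<and> j \<in> {2..n}}
                    \<union> apexG 1 P \<union> apexG 2 P"

fun vertex_weight :: "nat \<Rightarrow> (edge \<Rightarrow> bool) \<Rightarrow> nat \<times> nat \<Rightarrow> int" where
  "vertex_weight n \<sigma> (i,j) = PRE (\<sigma> (VE i j)) (i \<in> {1..n} \<and> \<sigma> (HE i (j+1))) (\<sigma> (VE (i+1) j))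
                                   (i \<in> {1..n} \<and> \<sigma> (HE i j)) (\<sigma> (AE 1 i j)) (\<sigma> (AE 2 i j))"

definition gate_val :: "nat \<Rightarrow> nat \<Rightarrow> nat \<Rightarrow> (nat \<times> nat) set \<Rightarrow> (edge \<Rightarrow> bool) \<Rightarrow> int" where
  "gate_val n lo hi P \<sigma> =
     (\<Prod>v\<in>{lo..hi} \<times> {1..n}. vertex_weight n \<sigma> v) * HW1 (apexG 1 P) \<sigma> * HW1 (apexG 2 P) \<sigma>"

definition gate_assign :: "nat \<Rightarrow> nat \<Rightarrow> nat \<Rightarrow> (nat \<times> nat) set \<Rightarrow> bool list \<Rightarrow> edge set \<Rightarrow> edge \<Rightarrow> bool" where
  "gate_assign n lo hi P x S e =
     (if e \<in> gate_edges n {Suc lo..hi} P then e \<in> S else dangling n lo (Suc hi) x e)"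

definition gate_sig :: "nat \<Rightarrow> nat \<Rightarrow> nat \<Rightarrow> (nat \<times> nat) set \<Rightarrow> bool list \<Rightarrow> int" where
  "gate_sig n lo hi P x =
     (\<Sum>S\<in>Pow (gate_edges n {Suc lo..hi} P). gate_val n lo hi P (gate_assign n lo hi P x S))"

definition gate_config :: "nat \<Rightarrow> nat \<Rightarrow> nat \<Rightarrow> bool list \<Rightarrow> nat \<times> nat \<Rightarrow> nat \<times> nat \<Rightarrow> edge set" where
  "gate_config n lo hi x p1 p2 =
     {VE i j | i j. i \<in> {Suc lo..hi} \<and> j \<in> {1..n} \<and> profile (north_bit x) p1 p2 i j}
     \<union> {HE i j | i j. i \<in> {1..n} \<and> j \<in> {2..n} \<and> west_bit n x i}
     \<union> {AE 1 (fst p1) (snd p1), AE 2 (fst p2) (snd p2)}"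

lemma in_apexG [simp]: "e \<in> apexG k P \<longleftrightarrow> (\<exists>i j. e = AE k i j \<and> (i,j) \<in> P)"
  by (auto simp: apexG_def)

lemma VE_in_gate_edges [simp]: "VE i j \<in> gate_edges n R P \<longleftrightarrow> i \<in> R \<and> j \<in> {1..n}"
  and HE_in_gate_edges [simp]: "HE i j \<in> gate_edges n R P \<longleftrightarrow> i \<in> {1..n} \<and> j \<in> {2..n}"
  and AE_in_gate_edges [simp]: "AE k i j \<in> gate_edges n R P \<longleftrightarrow> (k = 1 \<or> k = 2) \<and> (i,j) \<in> P"
  by (auto simp: gate_edges_def)

lemma VE_in_gate_config [simp]:
    "VE i j \<in> gate_config n lo hi x p1 p2 \<longleftrightarrow> i \<in> {Suc lo..hi} \<and> j \<in> {1..n} \<and> profile (north_bit x) p1 p2 i j"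
  and HE_in_gate_config [simp]:
    "HE i j \<in> gate_config n lo hi x p1 p2 \<longleftrightarrow> i \<in> {1..n} \<and> j \<in> {2..n} \<and> west_bit n x i"
  and AE_in_gate_config [simp]:
    "AE k i j \<in> gate_config n lo hi x p1 p2 \<longleftrightarrow> (k = 1 \<and> (i,j) = p1) \<or> (k = 2 \<and> (i,j) = p2)"
  by (cases p1; cases p2; auto simp: gate_config_def)+

lemma valG_eq_gate_val:
  assumes "\<And>k i j. (i,j) \<notin> A \<Longrightarrow> \<not> \<sigma> (AE k i j)"
  shows "valG n A \<sigma> = gate_val n 1 n A \<sigma>"
proof -
  have "grid_val n A \<sigma> = (\<Prod>v\<in>{1..n} \<times> {1..n}. vertex_weight n \<sigma> v)"
    unfolding grid_val_def by (rule prod.cong) (auto simp: assms PASS_eq_PRE)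
  then show ?thesis by (simp add: valG_def gate_val_def)
qed

lemma apexU_eq_apexG: "apexU n k A = apexG k (A \<union> dummy_vertices n)"
  by (auto simp: apexU_def apexG_def dummy_vertices_def)

lemma valU_eq_gate_val:
  assumes "\<And>k i j. (i,j) \<notin> A \<union> dummy_vertices n \<Longrightarrow> \<not> \<sigma> (AE k i j)"
  shows "valU n A \<sigma> = gate_val n 0 (n+1) (A \<union> dummy_vertices n) \<sigma>"
proof -
  have rows: "{0..n+1} \<times> {1..n} = {1..n} \<times> {1..n} \<union> dummy_vertices n"
    and disj: "{1..n} \<times> {1..n} \<inter> dummy_vertices n = {}"
    by (auto simp: dummy_vertices_def)
  have "grid_val n A \<sigma> = (\<Prod>v\<in>{1..n} \<times> {1..n}. vertex_weight n \<sigma> v)"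
    unfolding grid_val_def by (rule prod.cong) (auto simp: assms PASS_eq_PRE dummy_vertices_def)
  moreover have "dummy_val n \<sigma> = (\<Prod>v\<in>dummy_vertices n. vertex_weight n \<sigma> v)"
    unfolding dummy_val_def dummy_vertices_def by (rule prod.cong) (auto simp: hsig_def)
  moreover have "(\<Prod>v\<in>{0..n+1} \<times> {1..n}. vertex_weight n \<sigma> v)
      = (\<Prod>v\<in>{1..n} \<times> {1..n}. vertex_weight n \<sigma> v) * (\<Prod>v\<in>dummy_vertices n. vertex_weight n \<sigma> v)"
    unfolding rows by (rule prod.union_disjoint[OF _ _ disj]) (simp_all add: dummy_vertices_def)
  ultimately have "grid_val n A \<sigma> * dummy_val n \<sigma> = (\<Prod>v\<in>{0..n+1} \<times> {1..n}. vertex_weight n \<sigma> v)"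
    by simp
  then show ?thesis by (simp add: valU_def gate_val_def apexU_eq_apexG)
qed

lemma SigG_eq_gate_sig: "SigG n A x = gate_sig n 1 n A x"
proof -
  have edges: "internalG n A = gate_edges n {Suc 1..n} A"
    by (simp add: internalG_def gate_edges_def numeral_2_eq_2)
  show ?thesis
    unfolding SigG_def gate_sig_def gate_assign_def edges Suc_eq_plus1[symmetric]
    by (intro sum.cong refl valG_eq_gate_val) (simp add: dangling_def)
qed

lemma SigU_eq_gate_sig: "SigU n A x = gate_sig n 0 (n+1) (A \<union> dummy_vertices n) x"
proof -
  have edges: "internalU n A = gate_edges n {Suc 0..n+1} (A \<union> dummy_vertices n)"
    by (simp add: internalU_def gate_edges_def apexU_eq_apexG)
  have bottom: "n + 2 = Suc (n+1)" by simp
  show ?thesis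
    unfolding SigU_def gate_sig_def gate_assign_def edges bottom
    by (intro sum.cong refl valU_eq_gate_val) (simp add: dangling_def)
qed

section \<open>Non-vanishing assignments\<close>

lemma finite_gate_edges:
  assumes "finite R" "finite P"
  shows "finite (gate_edges n R P)"
proof -
  have "gate_edges n R P \<subseteq> (\<lambda>(i,j). VE i j) ` (R \<times> {1..n}) \<union> (\<lambda>(i,j). HE i j) ` ({1..n} \<times> {2..n})
      \<union> (\<lambda>(i,j). AE 1 i j) ` P \<union> (\<lambda>(i,j). AE 2 i j) ` P"
  proof
    fix e assume "e \<in> gate_edges n R P"
    then show "e \<in> (\<lambda>(i,j). VE i j) ` (R \<times> {1..n}) \<union> (\<lambda>(i,j). HE i j) ` ({1..n} \<times> {2..n})
      \<union> (\<lambda>(i,j). AE 1 i j) ` P \<union> (\<lambda>(i,j). AE 2 i j) ` P"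
      by (cases e) (auto simp: image_iff; force)+
  qed
  then show ?thesis by (rule finite_subset) (use assms in auto)
qed

lemma gate_config_subset:
  "p1 \<in> P \<Longrightarrow> p2 \<in> P \<Longrightarrow> gate_config n lo hi x p1 p2 \<subseteq> gate_edges n {Suc lo..hi} P"
proof
  fix e assume "p1 \<in> P" "p2 \<in> P" "e \<in> gate_config n lo hi x p1 p2"
  then show "e \<in> gate_edges n {Suc lo..hi} P" by (cases e) auto
qed

lemma gate_config_inj:
  "gate_config n lo hi x p1 p2 = gate_config n lo hi x q1 q2 \<Longrightarrow> p1 = q1 \<and> p2 = q2"
proof -
  assume eq: "gate_config n lo hi x p1 p2 = gate_config n lo hi x q1 q2"
  have "AE 1 (fst p1) (snd p1) \<in> gate_config n lo hi x q1 q2" "AE 2 (fst p2) (snd p2) \<in> gate_config n lo hi x q1 q2"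
    unfolding eq[symmetric] by simp_all
  then show ?thesis by simp
qed

lemma gate_assign_internal [simp]:
  "e \<in> gate_edges n {Suc lo..hi} P \<Longrightarrow> gate_assign n lo hi P x S e = (e \<in> S)"
  by (simp add: gate_assign_def)

lemma gate_assign_boundary [simp]:
  "gate_assign n lo hi P x S (VE lo j) = north_bit x j"
  "lo \<le> hi \<Longrightarrow> gate_assign n lo hi P x S (VE (Suc hi) j) = south_bit n x j"
  "gate_assign n lo hi P x S (HE i (Suc n)) = east_bit n x i"
  "0 < n \<Longrightarrow> gate_assign n lo hi P x S (HE i (Suc 0)) = west_bit n x i"
  by (simp_all add: gate_assign_def dangling_def north_bit_def south_bit_def east_bit_def west_bit_def)

lemma gate_assign_apex_outside:
  "(i,j) \<notin> P \<Longrightarrow> \<not> gate_assign n lo hi P x S (AE k i j)"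
  by (simp add: gate_assign_def dangling_def)

lemma HW1_apex_nonzero:
  assumes "HW1 (apexG k P) \<sigma> \<noteq> 0" and outside: "\<And>i j. (i,j) \<notin> P \<Longrightarrow> \<not> \<sigma> (AE k i j)"
  obtains p where "p \<in> P" "\<And>i j. \<sigma> (AE k i j) = ((i,j) = p)"
proof -
  have "card {e \<in> apexG k P. \<sigma> e} = 1" using assms(1) by (simp add: HW1_def split: if_splits)
  then obtain e0 where e0: "{e \<in> apexG k P. \<sigma> e} = {e0}" by (rule card_1_singletonE)
  then have "e0 \<in> apexG k P" by blast
  then obtain a b where ab: "e0 = AE k a b" "(a,b) \<in> P" by auto
  have "\<sigma> (AE k i j) = ((i,j) = (a,b))" for i j
  proof (cases "(i,j) \<in> P")
    case True
    then have "AE k i j \<in> apexG k P" by auto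
    then show ?thesis using e0 ab by auto
  next
    case False
    then show ?thesis using outside ab by auto
  qed
  then show ?thesis using that ab(2) by blast
qed

lemma HW1_apex_single:
  assumes "p \<in> P" "\<And>i j. \<sigma> (AE k i j) = ((i,j) = p)"
  shows "HW1 (apexG k P) \<sigma> = 1"
proof -
  have "{e \<in> apexG k P. \<sigma> e} = {AE k (fst p) (snd p)}" using assms by (cases p) auto
  then show ?thesis by (simp add: HW1_def)
qed

lemma gate_val_nonzero_local:
  assumes P: "P \<subseteq> {lo..hi} \<times> {1..n}" and rows: "lo \<le> 1" "n \<le> hi"
    and outside: "\<And>k i j. (i,j) \<notin> P \<Longrightarrow> \<not> \<sigma> (AE k i j)"
    and nz: "gate_val n lo hi P \<sigma> \<noteq> 0"
  obtains p1 p2 where "p1 \<in> P" "p2 \<in> P"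
    "\<And>i j. \<sigma> (AE 1 i j) = ((i,j) = p1)" "\<And>i j. \<sigma> (AE 2 i j) = ((i,j) = p2)"
    "\<And>i j. i \<in> {lo..hi} \<Longrightarrow> j \<in> {1..n} \<Longrightarrow>
       \<sigma> (VE (Suc i) j) = pre_south (\<sigma> (VE i j)) ((i,j) = p1) ((i,j) = p2)"
    "\<And>i j. i \<in> {1..n} \<Longrightarrow> j \<in> {1..n} \<Longrightarrow> \<sigma> (HE i (Suc j)) = \<sigma> (HE i j)"
proof -
  have grid: "(\<Prod>v\<in>{lo..hi} \<times> {1..n}. vertex_weight n \<sigma> v) \<noteq> 0"
    and apex1: "HW1 (apexG 1 P) \<sigma> \<noteq> 0" and apex2: "HW1 (apexG 2 P) \<sigma> \<noteq> 0"
    using nz by (auto simp: gate_val_def)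
  obtain p1 where p1: "p1 \<in> P" "\<And>i j. \<sigma> (AE 1 i j) = ((i,j) = p1)"
    using HW1_apex_nonzero[OF apex1 outside] by blast
  obtain p2 where p2: "p2 \<in> P" "\<And>i j. \<sigma> (AE 2 i j) = ((i,j) = p2)"
    using HW1_apex_nonzero[OF apex2 outside] by blast
  have local: "(i \<in> {1..n} \<and> \<sigma> (HE i (Suc j))) = (i \<in> {1..n} \<and> \<sigma> (HE i j))
      \<and> \<sigma> (VE (Suc i) j) = pre_south (\<sigma> (VE i j)) ((i,j) = p1) ((i,j) = p2)"
    if "i \<in> {lo..hi}" "j \<in> {1..n}" for i j
  proof -
    have "vertex_weight n \<sigma> (i,j) \<noteq> 0" using grid that by (simp add: prod_zero_iff)
    from PRE_nonzero_imp[OF this[unfolded vertex_weight.simps p1(2) p2(2)]] show ?thesis by simp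
  qed
  show ?thesis
  proof (rule that[OF p1(1) p2(1) p1(2) p2(2)])
    fix i j assume "i \<in> {1..n}" "j \<in> {1..n}"
    moreover have "i \<in> {lo..hi}" using calculation rows by auto
    ultimately show "\<sigma> (HE i (Suc j)) = \<sigma> (HE i j)" using local by blast
  qed (use local in blast)
qed

lemma gate_val_nonzero_imp_config:
  assumes P: "P \<subseteq> {lo..hi} \<times> {1..n}" and rows: "lo \<le> 1" "n \<le> hi"
    and S: "S \<subseteq> gate_edges n {Suc lo..hi} P"
    and nz: "gate_val n lo hi P (gate_assign n lo hi P x S) \<noteq> 0"
  shows "(\<exists>p1\<in>P. \<exists>p2\<in>P. S = gate_config n lo hi x p1 p2) \<and> (\<forall>i\<in>{1..n}. west_bit n x i = east_bit n x i)"
proof -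
  let ?\<sigma> = "gate_assign n lo hi P x S"
  obtain p1 p2 where p: "p1 \<in> P" "p2 \<in> P"
    and a1: "\<And>i j. ?\<sigma> (AE 1 i j) = ((i,j) = p1)" and a2: "\<And>i j. ?\<sigma> (AE 2 i j) = ((i,j) = p2)"
    and V: "\<And>i j. i \<in> {lo..hi} \<Longrightarrow> j \<in> {1..n} \<Longrightarrow>
              ?\<sigma> (VE (Suc i) j) = pre_south (?\<sigma> (VE i j)) ((i,j) = p1) ((i,j) = p2)"
    and H: "\<And>i j. i \<in> {1..n} \<Longrightarrow> j \<in> {1..n} \<Longrightarrow> ?\<sigma> (HE i (Suc j)) = ?\<sigma> (HE i j)"
    using gate_val_nonzero_local[where \<sigma> = ?\<sigma>, OF P rows gate_assign_apex_outside nz] by blast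
  have vert: "?\<sigma> (VE i j) = profile (north_bit x) p1 p2 i j" if "lo \<le> i" "i \<le> Suc hi" "j \<in> {1..n}" for i j
    by (rule profile_unique[where v = "\<lambda>i. ?\<sigma> (VE i j)"]) (use that p P V in auto)
  have horiz: "?\<sigma> (HE i j) = west_bit n x i" if "i \<in> {1..n}" "1 \<le> j" "j \<le> Suc n" for i j
    using that(2,3)
  proof (induction j rule: dec_induct)
    case base
    show ?case using that(1) by simp
  next
    case (step j)
    then show ?case using H[of i j] that(1) by simp
  qed
  have "S = gate_config n lo hi x p1 p2"
  proof (rule set_eqI)
    fix e
    show "e \<in> S \<longleftrightarrow> e \<in> gate_config n lo hi x p1 p2"
    proof (cases "e \<in> gate_edges n {Suc lo..hi} P")
      case False
      then show ?thesis using S gate_config_subset[OF p] by blast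
    next
      case True
      moreover have "?\<sigma> e \<longleftrightarrow> e \<in> gate_config n lo hi x p1 p2"
        using True by (cases e) (auto simp: vert horiz a1[unfolded One_nat_def] a2 simp del: gate_assign_internal)
      ultimately show ?thesis by simp
    qed
  qed
  moreover have "west_bit n x i = east_bit n x i" if "i \<in> {1..n}" for i
    using horiz[of i "Suc n"] that by simp
  ultimately show ?thesis using p by blast
qed

lemma gate_assign_config_VE:
  assumes P: "P \<subseteq> {lo..hi} \<times> {1..n}" and rows: "lo \<le> 1" "n \<le> hi" and "0 < n"
    and p: "p1 \<in> P" "p2 \<in> P" and i: "lo \<le> i" "i \<le> Suc hi" and j: "j \<in> {1..n}"
  shows "gate_assign n lo hi P x (gate_config n lo hi x p1 p2) (VE i j)
       = (if i = Suc hi then south_bit n x j else profile (north_bit x) p1 p2 i j)"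
proof -
  have "lo \<le> fst p1" "lo \<le> fst p2" using p P by auto
  consider "i = lo" | "i \<in> {Suc lo..hi}" | "i = Suc hi" using i by force
  then show ?thesis
  proof cases
    case 1
    then show ?thesis using \<open>lo \<le> fst p1\<close> \<open>lo \<le> fst p2\<close> rows \<open>0 < n\<close> by (auto simp: profile_above)
  qed (use j rows \<open>0 < n\<close> in auto)
qed

lemma gate_assign_config_HE:
  assumes r: "r \<in> {1..n}" and j: "j \<in> {1..Suc n}"
    and west: "\<forall>i\<in>{1..n}. west_bit n x i = (i = r)" and east: "\<forall>i\<in>{1..n}. east_bit n x i = (i = r)"
  shows "(i \<in> {1..n} \<and> gate_assign n lo hi P x (gate_config n lo hi x p1 p2) (HE i j)) = (i = r)"
proof -
  consider "j = 1" | "j \<in> {2..n}" | "j = Suc n" using j by force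
  then show ?thesis using west east r by cases auto
qed

lemma gate_assign_config_AE:
  assumes "p1 \<in> P" "p2 \<in> P" "k = 1 \<or> k = 2"
  shows "gate_assign n lo hi P x (gate_config n lo hi x p1 p2) (AE k i j) = (k = 1 \<and> (i,j) = p1 \<or> k = 2 \<and> (i,j) = p2)"
  using assms by (cases "(i,j) \<in> P") (auto simp: gate_assign_apex_outside)

lemma gate_val_config:
  assumes P: "P \<subseteq> {lo..hi} \<times> {1..n}" and rows: "lo \<le> 1" "n \<le> hi"
    and p: "p1 \<in> P" "p2 \<in> P" and r: "r \<in> {1..n}"
    and west: "\<forall>i\<in>{1..n}. west_bit n x i = (i = r)" and east: "\<forall>i\<in>{1..n}. east_bit n x i = (i = r)"
  shows "gate_val n lo hi P (gate_assign n lo hi P x (gate_config n lo hi x p1 p2))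
       = pair_weight (north_bit x) n r (south_bit n x) (Suc hi) p1 p2"
proof -
  let ?\<sigma> = "gate_assign n lo hi P x (gate_config n lo hi x p1 p2)"
  let ?p = "profile (north_bit x) p1 p2"
  have n: "0 < n" using r by simp
  note A = gate_assign_config_AE[OF p]
  have "(\<Prod>v\<in>{lo..hi} \<times> {1..n}. vertex_weight n ?\<sigma> v)
      = (\<Prod>(i,j)\<in>{lo..hi} \<times> {1..n}. PRE (?p i j) (i = r)
            (if i = hi then south_bit n x j else ?p (Suc i) j) (i = r) ((i,j) = p1) ((i,j) = p2))"
  proof (rule prod.cong[OF refl])
    fix v assume "v \<in> {lo..hi} \<times> {1..n}"
    then obtain i j where v: "v = (i,j)" "i \<in> {lo..hi}" "j \<in> {1..n}" by auto
    have "?\<sigma> (VE i j) = ?p i j" "?\<sigma> (VE (Suc i) j) = (if i = hi then south_bit n x j else ?p (Suc i) j)"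
      using gate_assign_config_VE[OF P rows n p, of i j] gate_assign_config_VE[OF P rows n p, of "Suc i" j] v
      by auto
    moreover have "(i \<in> {1..n} \<and> ?\<sigma> (HE i (Suc j))) = (i = r)" "(i \<in> {1..n} \<and> ?\<sigma> (HE i j)) = (i = r)"
      using gate_assign_config_HE[OF r _ west east] v by auto
    moreover have "?\<sigma> (AE 1 i j) = ((i,j) = p1)" "?\<sigma> (AE 2 i j) = ((i,j) = p2)"
      using A by auto
    ultimately show "vertex_weight n ?\<sigma> v = (case v of (i,j) \<Rightarrow> PRE (?p i j) (i = r)
        (if i = hi then south_bit n x j else ?p (Suc i) j) (i = r) ((i,j) = p1) ((i,j) = p2))"
      unfolding v(1) vertex_weight.simps Suc_eq_plus1[symmetric] by simp
  qed
  also have "\<dots> = pair_weight (north_bit x) n r (south_bit n x) (Suc hi) p1 p2"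
    by (rule prod_PRE_profile) (use p P r rows in auto)
  finally show ?thesis
    using HW1_apex_single[of p1 P ?\<sigma> 1] HW1_apex_single[of p2 P ?\<sigma> 2] p A by (simp add: gate_val_def)
qed

lemma sum_Pow_concentrated:
  fixes val :: "'e set \<Rightarrow> 'b::comm_monoid_add" and C :: "'p \<Rightarrow> 'p \<Rightarrow> 'e set"
  assumes "finite I" "finite P"
    and sub: "\<And>p1 p2. p1 \<in> P \<Longrightarrow> p2 \<in> P \<Longrightarrow> C p1 p2 \<subseteq> I"
    and inj: "\<And>p1 p2 q1 q2. C p1 p2 = C q1 q2 \<Longrightarrow> p1 = q1 \<and> p2 = q2"
    and support: "\<And>S. S \<subseteq> I \<Longrightarrow> val S \<noteq> 0 \<Longrightarrow> \<exists>p1\<in>P. \<exists>p2\<in>P. S = C p1 p2"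
  shows "(\<Sum>S\<in>Pow I. val S) = (\<Sum>(p1,p2)\<in>P \<times> P. val (C p1 p2))"
proof -
  let ?C = "\<lambda>(p1,p2). C p1 p2"
  have "(\<Sum>S\<in>Pow I. val S) = (\<Sum>S\<in>?C ` (P \<times> P). val S)"
    by (rule sum.mono_neutral_right) (use assms in \<open>auto dest: support\<close>)
  also have "\<dots> = (\<Sum>p\<in>P \<times> P. val (?C p))"
    by (rule sum.reindex_cong[where l = ?C]) (auto simp: inj_on_def dest: inj)
  finally show ?thesis by (simp add: case_prod_unfold)
qed

lemma gate_sig_eq_0:
  assumes P: "P \<subseteq> {lo..hi} \<times> {1..n}" and rows: "lo \<le> 1" "n \<le> hi"
    and "\<not> (\<forall>i\<in>{1..n}. west_bit n x i = east_bit n x i)"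
  shows "gate_sig n lo hi P x = 0"
  unfolding gate_sig_def by (rule sum.neutral) (use gate_val_nonzero_imp_config[OF P rows] assms(4) in blast)

lemma gate_sig_eq_sum_pair_value:
  assumes P: "P \<subseteq> {lo..hi} \<times> {1..n}" and rows: "lo \<le> 1" "n \<le> hi"
    and c: "c \<in> {1..n}" and r: "r \<in> {1..n}" and north: "\<forall>j\<in>{1..n}. north_bit x j = (j = c)"
    and west: "\<forall>i\<in>{1..n}. west_bit n x i = (i = r)" and east: "\<forall>i\<in>{1..n}. east_bit n x i = (i = r)"
  shows "gate_sig n lo hi P x = (\<Sum>(p1,p2)\<in>P \<times> P. pair_value n c r (south_bit n x) p1 p2)"
proof -
  have finP: "finite P" using P finite_subset by blast
  have "gate_sig n lo hi P x
      = (\<Sum>(p1,p2)\<in>P \<times> P. gate_val n lo hi P (gate_assign n lo hi P x (gate_config n lo hi x p1 p2)))"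
    unfolding gate_sig_def
  proof (rule sum_Pow_concentrated)
    show "finite (gate_edges n {Suc lo..hi} P)" using finP by (simp add: finite_gate_edges)
  qed (use finP gate_config_subset gate_config_inj gate_val_nonzero_imp_config[OF P rows] in auto)
  also have "\<dots> = (\<Sum>(p1,p2)\<in>P \<times> P. pair_value n c r (south_bit n x) p1 p2)"
  proof (rule sum.cong[OF refl], clarify)
    fix a1 b1 a2 b2 assume "(a1,b1) \<in> P" "(a2,b2) \<in> P"
    moreover from this have "b1 \<in> {1..n}" "b2 \<in> {1..n}" "a1 < Suc hi" "a2 < Suc hi" using P by auto
    ultimately show "gate_val n lo hi P (gate_assign n lo hi P x (gate_config n lo hi x (a1,b1) (a2,b2)))
        = pair_value n c r (south_bit n x) (a1,b1) (a2,b2)"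
      using pair_weight_eq_pair_value[OF _ _ c north] by (simp add: gate_val_config[OF P rows _ _ r west east])
  qed
  finally show ?thesis .
qed

section \<open>Boundary strings\<close>

lemma wpos_indicator:
  assumes "hw s = 1"
  shows "wpos s \<in> {1..length s}" "\<forall>k<length s. s ! k = (Suc k = wpos s)"
proof -
  have "card {k. k < length s \<and> s ! k} = 1"
    using assms by (simp add: hw_def length_filter_conv_card)
  then obtain k0 where "{k. k < length s \<and> s ! k} = {k0}" by (rule card_1_singletonE)
  then have k0: "k0 < length s" and sk: "\<And>k. k < length s \<Longrightarrow> s ! k = (k = k0)" by auto
  let ?P = "\<lambda>v. v \<in> {1..length s} \<and> s = replicate (v - 1) False @ True # replicate (length s - v) False"
  have "s = replicate k0 False @ True # replicate (length s - Suc k0) False"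
    by (rule nth_equalityI) (use k0 sk in \<open>auto simp: nth_append nth_Cons'\<close>)
  then have "?P (Suc k0)" using k0 by simp
  moreover have "v = Suc k0" if "?P v" for v
  proof -
    from that obtain ys where "v \<in> {1..length s}" "s = replicate (v - 1) False @ True # ys" by blast
    then show ?thesis using sk[of "v - 1"] by (auto simp: nth_append)
  qed
  ultimately have "wpos s = Suc k0" unfolding wpos_def by (rule the_equality)
  then show "wpos s \<in> {1..length s}" "\<forall>k<length s. s ! k = (Suc k = wpos s)"
    using k0 sk by auto
qed

lemma ball_atLeastAtMost_Suc: "(\<forall>j\<in>{1..n}. P j) \<longleftrightarrow> (\<forall>k<n. P (Suc k))"
proof
  assume h: "\<forall>k<n. P (Suc k)"
  show "\<forall>j\<in>{1..n}. P j"
  proof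
    fix j assume "j \<in> {1..n}"
    then have "j = Suc (j - 1)" "j - 1 < n" by auto
    then show "P j" using h by metis
  qed
qed auto

lemma blocks_length:
  assumes "length x = 4 * n"
  shows "length (xN n x) = n" "length (xE n x) = n" "length (xS n x) = n" "length (xW n x) = n"
  using assms by (simp_all add: xN_def xE_def xS_def xW_def)

lemma blocks_nth:
  assumes "length x = 4 * n" "k < n"
  shows "xN n x ! k = north_bit x (Suc k)" "xE n x ! k = east_bit n x (Suc k)"
    "xS n x ! k = south_bit n x (Suc k)" "xW n x ! k = west_bit n x (Suc k)"
  using assms by (simp_all add: xN_def xE_def xS_def xW_def north_bit_def east_bit_def south_bit_def west_bit_def)

lemma phi_prop_iff_bits:
  assumes "length x = 4 * n"
  shows "phi_prop n x \<longleftrightarrow> (\<forall>j\<in>{1..n}. north_bit x j = south_bit n x j)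
                          \<and> (\<forall>i\<in>{1..n}. west_bit n x i = east_bit n x i)"
  unfolding phi_prop_def ball_atLeastAtMost_Suc
  by (simp add: list_eq_iff_nth_eq blocks_length[OF assms] blocks_nth[OF assms])

lemma phi_one_indicators:
  assumes "length x = 4 * n" "phi_one n x"
  shows "wpos (xN n x) \<in> {1..n}" "\<forall>j\<in>{1..n}. north_bit x j = (j = wpos (xN n x))"
    "wpos (xW n x) \<in> {1..n}" "\<forall>i\<in>{1..n}. west_bit n x i = (i = wpos (xW n x))"
  using assms(2) wpos_indicator[of "xN n x"] wpos_indicator[of "xW n x"]
  unfolding ball_atLeastAtMost_Suc
  by (auto simp: phi_one_def blocks_length[OF assms(1)] blocks_nth[OF assms(1)])

theorem mainTheorem13:
  fixes n T :: nat and A :: "(nat \<times> nat) set" and x :: "bool list"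
  assumes "A \<subseteq> {1..n} \<times> {1..n}"
    and "\<forall>u\<in>{1..n}. card {v \<in> {1..n}. (u, v) \<in> A} = T"
    and "length x = 4 * n"
    and "phi_one n x"
  shows "(\<not> phi_prop n x \<longrightarrow> SigU n A x - SigG n A x = 0)
       \<and> (phi_prop n x \<and> (wpos (xW n x), wpos (xN n x)) \<notin> A \<longrightarrow>
            SigU n A x - SigG n A x = int n - 2 * int T - 2)
       \<and> (phi_prop n x \<and> (wpos (xW n x), wpos (xN n x)) \<in> A \<longrightarrow>
            SigU n A x - SigG n A x = int n - 2 * int T + 2)"
proof -
  define c r where "c = wpos (xN n x)" and "r = wpos (xW n x)"
  note bits = phi_one_indicators[OF assms(3,4), folded c_def r_def]
  have PG: "A \<subseteq> {1..n} \<times> {1..n}" and PU: "A \<union> dummy_vertices n \<subseteq> {0..n+1} \<times> {1..n}"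
    using assms(1) by (auto simp: dummy_vertices_def)
  note phi_prop = phi_prop_iff_bits[OF assms(3)]
  show ?thesis
  proof (cases "\<forall>i\<in>{1..n}. west_bit n x i = east_bit n x i")
    case False
    then have "\<not> phi_prop n x" using phi_prop by blast
    then show ?thesis
      using gate_sig_eq_0[OF PG order_refl order_refl False] gate_sig_eq_0[OF PU le0 le_add1 False]
      by (simp add: SigG_eq_gate_sig SigU_eq_gate_sig)
  next
    case True
    then have east: "\<forall>i\<in>{1..n}. east_bit n x i = (i = r)" using bits(4) by auto
    have "SigU n A x - SigG n A x = (if \<forall>j\<in>{1..n}. south_bit n x j = (j = c) then 1 else 0)
        * (int n - 2 - 2 * int T + (if (r,c) \<in> A then 4 else 0))"
      unfolding SigG_eq_gate_sig SigU_eq_gate_sig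
        gate_sig_eq_sum_pair_value[OF PG order_refl order_refl bits(1,3,2,4) east]
        gate_sig_eq_sum_pair_value[OF PU le0 le_add1 bits(1,3,2,4) east]
      using sum_pair_value_dummy_difference[OF bits(1,3) assms(1)] assms(2) bits(3) by simp
    moreover have "phi_prop n x \<longleftrightarrow> (\<forall>j\<in>{1..n}. south_bit n x j = (j = c))"
      using phi_prop True bits(2) by auto
    ultimately show ?thesis by (auto simp: c_def r_def)
  qed
qed

end
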